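(* Let $D$ be a Dedekind domain and let $M$ be a nonzero finitely generated multiplication $D$-module. Then $M$ is isomorphic to a nonzero ideal of $D$ (e.g. $D$ itself) or to $D/I$ for some nonzero ideal $I$ of $D$.
   Context: All rings are commutative with $1$ and all modules are unital. An $R$-module $M$ is a multiplication module if every submodule of $M$ equals $IM$ for some ideal $I$ of $R$. *)

theory Defs
  imports "HOL-Algebra.Algebra"
begin

text \<open>Integral closedness in the field of fractions, written out with denominators cleared:
  if a/b (b nonzero) is a root of a monic polynomial X^n + c_(n-1) X^(n-1) + ... + c_0
  with coefficients in R, i.e. a^n + sum_(i<n) c_i a^i b^(n-i) = 0, then a/b lies in R,
  i.e. b divides a.\<close>
definition integrally_closed_domain :: "('a, 'c) ring_scheme \<Rightarrow> bool" where
  "integrally_closed_domain R \<longleftrightarrow> domain R \<and>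
     (\<forall>a \<in> carrier R. \<forall>b \<in> carrier R. \<forall>n::nat. \<forall>c::nat \<Rightarrow> 'a.
        b \<noteq> \<zero>\<^bsub>R\<^esub> \<and> n \<ge> 1 \<and> (\<forall>i. c i \<in> carrier R) \<and>
        a [^]\<^bsub>R\<^esub> n \<oplus>\<^bsub>R\<^esub>
          (\<Oplus>\<^bsub>R\<^esub> i \<in> {..<n}. c i \<otimes>\<^bsub>R\<^esub> a [^]\<^bsub>R\<^esub> i \<otimes>\<^bsub>R\<^esub> b [^]\<^bsub>R\<^esub> (n - i))
          = \<zero>\<^bsub>R\<^esub>
        \<longrightarrow> b divides\<^bsub>R\<^esub> a)"

definition dedekind_domain :: "('a, 'c) ring_scheme \<Rightarrow> bool" where
  "dedekind_domain R \<longleftrightarrow> noetherian_domain R \<and> integrally_closed_domain R \<and>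
     (\<forall>P. primeideal P R \<and> P \<noteq> {\<zero>\<^bsub>R\<^esub>} \<longrightarrow> maximalideal P R)"

definition gen_submodule :: "('a, 'c) ring_scheme \<Rightarrow> ('a, 'b, 'd) module_scheme \<Rightarrow> 'b set \<Rightarrow> 'b set" where
  "gen_submodule R M S = \<Inter> {N. submodule N R M \<and> S \<subseteq> N}"

definition finitely_generated_module :: "('a, 'c) ring_scheme \<Rightarrow> ('a, 'b, 'd) module_scheme \<Rightarrow> bool" where
  "finitely_generated_module R M \<longleftrightarrow>
     (\<exists>S. finite S \<and> S \<subseteq> carrier M \<and> carrier M = gen_submodule R M S)"

definition ideal_times_module :: "('a, 'c) ring_scheme \<Rightarrow> 'a set \<Rightarrow> ('a, 'b, 'd) module_scheme \<Rightarrow> 'b set" where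
  "ideal_times_module R I M =
     gen_submodule R M {a \<odot>\<^bsub>M\<^esub> x | a x. a \<in> I \<and> x \<in> carrier M}"

definition multiplication_module :: "('a, 'c) ring_scheme \<Rightarrow> ('a, 'b, 'd) module_scheme \<Rightarrow> bool" where
  "multiplication_module R M \<longleftrightarrow>
     (\<forall>N. submodule N R M \<longrightarrow> (\<exists>I. ideal I R \<and> N = ideal_times_module R I M))"

definition module_iso :: "('a, 'c) ring_scheme \<Rightarrow> ('a, 'b, 'd) module_scheme \<Rightarrow> ('a, 'e, 'f) module_scheme
    \<Rightarrow> ('b \<Rightarrow> 'e) \<Rightarrow> bool" where
  "module_iso R M N f \<longleftrightarrow>
     bij_betw f (carrier M) (carrier N) \<and>
     (\<forall>x \<in> carrier M. \<forall>y \<in> carrier M. f (x \<oplus>\<^bsub>M\<^esub> y) = f x \<oplus>\<^bsub>N\<^esub> f y) \<and>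
     (\<forall>a \<in> carrier R. \<forall>x \<in> carrier M. f (a \<odot>\<^bsub>M\<^esub> x) = a \<odot>\<^bsub>N\<^esub> f x)"

definition module_isomorphic :: "('a, 'c) ring_scheme \<Rightarrow> ('a, 'b, 'd) module_scheme \<Rightarrow> ('a, 'e, 'f) module_scheme
    \<Rightarrow> bool" where
  "module_isomorphic R M N \<longleftrightarrow> (\<exists>f. module_iso R M N f)"

definition ideal_module :: "('a, 'c) ring_scheme \<Rightarrow> 'a set \<Rightarrow> ('a, 'a) module" where
  "ideal_module R J =
     \<lparr>carrier = J, monoid.mult = monoid.mult R, one = monoid.one R, ring.zero = ring.zero R, ring.add = ring.add R,
      smult = monoid.mult R\<rparr>"

definition quot_smult :: "('a, 'c) ring_scheme \<Rightarrow> 'a set \<Rightarrow> 'a \<Rightarrow> 'a set \<Rightarrow> 'a set" where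
  "quot_smult R I r C = monoid.mult (FactRing R I) (a_r_coset R I r) C"

definition quotient_module :: "('a, 'c) ring_scheme \<Rightarrow> 'a set \<Rightarrow> ('a, 'a set) module" where
  "quotient_module R I =
     \<lparr>carrier = carrier (R Quot I), monoid.mult = monoid.mult (R Quot I),
      one = monoid.one (R Quot I), ring.zero = ring.zero (R Quot I), ring.add = ring.add (R Quot I),
      smult = quot_smult R I\<rparr>"

end

theory Submission
  imports Defs
begin

text \<open>
  If M is faithful, apply the multiplication property to the cyclic submodule D x0 of some x0 \<noteq> 0:
  D x0 = I M with I \<noteq> 0, so a nonzero d \<in> I satisfies d M \<subseteq> D x0. Faithfulness makes M torsion-free,
  hence x \<mapsto> the unique a with a x0 = d x embeds M into D, with a nonzero ideal as image.

  Otherwise the annihilator A of M is nonzero. By Noetherianity A contains a product of primes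
  P1, ..., Pn containing A, and these are maximal. Nakayama's lemma gives M \<noteq> Pi M for each i,
  and a prime-avoidance argument gives one m outside every Pi M. Writing D m = I M, the ideal I
  lies in no Pi, so each Pi meets 1 + I (the coset I +> 1). The product of such elements lies in
  A \<inter> (1 + I), which forces M = I M = D m \<cong> D/A.
\<close>

section \<open>Elements congruent to one modulo an ideal\<close>

lemma (in ring) mem_one_coset_iff:
  "x \<in> I +> \<one> \<longleftrightarrow> (\<exists>i\<in>I. x = i \<oplus> \<one>)"
  by (auto simp: a_r_coset_def')

context ideal
begin

lemma one_coset_subset_carrier: "I +> \<one> \<subseteq> carrier R"
  by (auto simp: mem_one_coset_iff)

lemma one_mem_one_coset: "\<one> \<in> I +> \<one>"
  by (force simp: mem_one_coset_iff)

lemma one_coset_mult_closed: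
  assumes x: "x \<in> I +> \<one>" and y: "y \<in> I +> \<one>"
  shows "x \<otimes> y \<in> I +> \<one>"
proof -
  obtain i j where ij: "i \<in> I" "j \<in> I" "x = i \<oplus> \<one>" "y = j \<oplus> \<one>"
    using x y by (auto simp: mem_one_coset_iff)
  have "x \<otimes> y = (i \<otimes> j \<oplus> i \<oplus> j) \<oplus> \<one>"
    using ij by (simp add: l_distr r_distr a_ac)
  moreover have "i \<otimes> j \<oplus> i \<oplus> j \<in> I" using ij by (simp add: I_r_closed)
  ultimately show ?thesis by (auto simp: mem_one_coset_iff)
qed

lemma one_coset_foldr_closed: "set xs \<subseteq> I +> \<one> \<Longrightarrow> foldr (\<otimes>) xs \<one> \<in> I +> \<one>"
  by (induction xs) (simp_all add: one_mem_one_coset one_coset_mult_closed)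

lemma one_coset_add_closed:
  assumes s: "s \<in> I +> \<one>" and a: "a \<in> I"
  shows "a \<oplus> s \<in> I +> \<one>"
proof -
  obtain i where i: "i \<in> I" "s = i \<oplus> \<one>" using s by (auto simp: mem_one_coset_iff)
  then have "a \<oplus> s = (a \<oplus> i) \<oplus> \<one>" using a by (simp add: a_assoc)
  then show ?thesis using i a by (auto simp: mem_one_coset_iff)
qed

lemma one_mem_if_meets_one_coset:
  assumes "s \<in> I" "s \<in> I +> \<one>"
  shows "\<one> \<in> I"
proof -
  obtain i where i: "i \<in> I" "s = i \<oplus> \<one>" using assms(2) by (auto simp: mem_one_coset_iff)
  have "\<ominus> i \<oplus> s \<in> I" using i(1) assms(1) by simp
  moreover have "\<ominus> i \<oplus> s = \<one>" using i by (simp add: a_assoc[symmetric] l_neg)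
  ultimately show ?thesis by simp
qed

lemma maximalideal_meets_one_coset:
  assumes P: "maximalideal P R" and IP: "\<not> I \<subseteq> P"
  shows "\<exists>p\<in>P. p \<in> I +> \<one>"
proof -
  have PI: "ideal P R" using P by (rule maximalideal.axioms(1))
  have "P \<union> I \<subseteq> carrier R" using ideal.Icarr[OF PI] Icarr by blast
  then have "P \<union> I \<subseteq> P <+> I" using genideal_self union_genideal[OF PI is_ideal] by metis
  then have "P <+> I = carrier R"
    using maximalideal.I_maximal[OF P add_ideals[OF PI is_ideal]] IP
      ideal.Icarr[OF add_ideals[OF PI is_ideal]] by blast
  then obtain p i where pi: "p \<in> P" "i \<in> I" "\<one> = p \<oplus> i"
    using one_closed unfolding set_add_def' by blast
  have "p \<in> carrier R" using pi(1) ideal.Icarr[OF PI] by blast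
  then have "p = \<ominus> i \<oplus> \<one>" using pi by (simp add: a_comm[of p i] a_assoc[symmetric] l_neg)
  moreover have "\<ominus> i \<in> I" using pi(2) by simp
  ultimately show ?thesis using pi(1) unfolding mem_one_coset_iff by blast
qed

end

section \<open>Prime ideals over an ideal\<close>

lemma (in cring) exists_mem_ideals_not_mem_prime:
  assumes Q: "primeideal Q R" and fin: "finite Ps" and Ps: "\<forall>P\<in>Ps. ideal P R \<and> \<not> P \<subseteq> Q"
  shows "\<exists>f\<in>carrier R. f \<notin> Q \<and> (\<forall>P\<in>Ps. f \<in> P)"
  using fin Ps
proof (induction Ps rule: finite_induct)
  case empty
  have "\<one> \<notin> Q"
    using ideal.one_imp_carrier[OF primeideal.axioms(1)[OF Q]] primeideal.I_notcarr[OF Q] by blast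
  then show ?case by blast
next
  case (insert P Ps)
  obtain f where f: "f \<in> carrier R" "f \<notin> Q" "\<forall>P'\<in>Ps. f \<in> P'" using insert by blast
  obtain a where a: "a \<in> P" "a \<notin> Q" using insert.prems by blast
  have PI: "ideal P R" using insert.prems by blast
  have ac: "a \<in> carrier R" using a(1) ideal.Icarr[OF PI] by blast
  have "f \<otimes> a \<notin> Q" using primeideal.I_prime[OF Q f(1) ac] f(2) a(2) by blast
  moreover have "f \<otimes> a \<in> P" using ideal.I_l_closed[OF PI a(1) f(1)] .
  moreover have "f \<otimes> a \<in> P'" if "P' \<in> Ps" for P'
    using ideal.I_r_closed[of P' R f a] f(3) that ac insert.prems by blast
  ultimately show ?case using f(1) ac by blast
qed

lemma (in cring) genideal_insert_mult_closed:
  assumes B: "ideal B R" and ab: "a \<in> carrier R" "b \<in> carrier R" "a \<otimes> b \<in> B"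
    and x: "x \<in> Idl (insert a B)" and y: "y \<in> Idl (insert b B)"
  shows "x \<otimes> y \<in> B"
proof -
  have BR: "B \<subseteq> carrier R" using ideal.Icarr[OF B] by blast
  have "Idl (insert b B) \<subseteq> {y \<in> carrier R. a \<otimes> y \<in> B}"
    using ab BR ideal.I_r_closed[OF B] m_comm
    by (intro genideal_minimal ideal.helper_max_prime[OF B is_cring]) auto
  then have y': "y \<in> carrier R" "a \<otimes> y \<in> B" using y by auto
  have "Idl (insert a B) \<subseteq> {x \<in> carrier R. y \<otimes> x \<in> B}"
    using ab BR ideal.I_l_closed[OF B] y' m_comm
    by (intro genideal_minimal ideal.helper_max_prime[OF B is_cring]) auto
  then show ?thesis using x y' m_comm by auto
qed

context ring
begin

lemma foldr_mult_closed: "set xs \<subseteq> carrier R \<Longrightarrow> foldr (\<otimes>) xs \<one> \<in> carrier R"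
  by (induction xs) auto

lemma foldr_mult_append:
  "set xs \<subseteq> carrier R \<Longrightarrow> set ys \<subseteq> carrier R \<Longrightarrow>
    foldr (\<otimes>) (xs @ ys) \<one> = foldr (\<otimes>) xs \<one> \<otimes> foldr (\<otimes>) ys \<one>"
  by (induction xs) (auto simp: foldr_mult_closed m_assoc)

text \<open>The product ideal P1 \<cdots> Pn of the listed primes lies in I, stated elementwise.\<close>
definition prime_product_in :: "'a set \<Rightarrow> 'a set list \<Rightarrow> bool" where
  "prime_product_in I Ps \<longleftrightarrow> (\<forall>P\<in>set Ps. primeideal P R \<and> I \<subseteq> P) \<and>
     (\<forall>xs. list_all2 (\<in>) xs Ps \<longrightarrow> foldr (\<otimes>) xs \<one> \<in> I)"

lemma prime_product_in_prime: "primeideal P R \<Longrightarrow> prime_product_in P [P]"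
  unfolding prime_product_in_def
  by (auto simp: list_all2_Cons2 dest: ideal.Icarr[OF primeideal.axioms(1)])

lemma prime_product_in_append:
  assumes Ps: "prime_product_in I Ps" and Qs: "prime_product_in J Qs"
    and BI: "B \<subseteq> I" and BJ: "B \<subseteq> J" and IJ: "\<And>x y. x \<in> I \<Longrightarrow> y \<in> J \<Longrightarrow> x \<otimes> y \<in> B"
  shows "prime_product_in B (Ps @ Qs)"
  unfolding prime_product_in_def
proof (intro conjI allI impI)
  show "\<forall>P\<in>set (Ps @ Qs). primeideal P R \<and> B \<subseteq> P"
    using Ps Qs BI BJ unfolding prime_product_in_def set_append by blast
  have carrier: "set xs \<subseteq> carrier R" if "list_all2 (\<in>) xs Ps'" "\<forall>P\<in>set Ps'. primeideal P R" for xs Ps'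
    using that
    by (induction rule: list_all2_induct) (auto dest: ideal.Icarr[OF primeideal.axioms(1)])
  fix xs assume "list_all2 (\<in>) xs (Ps @ Qs)"
  then obtain us vs where uv: "xs = us @ vs" "list_all2 (\<in>) us Ps" "list_all2 (\<in>) vs Qs"
    unfolding list_all2_append2 by blast
  have "set us \<subseteq> carrier R" "set vs \<subseteq> carrier R"
    using uv Ps Qs carrier unfolding prime_product_in_def by auto
  moreover have "foldr (\<otimes>) us \<one> \<in> I" "foldr (\<otimes>) vs \<one> \<in> J"
    using uv Ps Qs unfolding prime_product_in_def by auto
  ultimately show "foldr (\<otimes>) xs \<one> \<in> B"
    unfolding uv(1) by (simp only: foldr_mult_append IJ)
qed

end

lemma (in noetherian_ring) ideals_have_maximal_element:
  assumes "F \<noteq> {}" and "\<And>I. I \<in> F \<Longrightarrow> ideal I R"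
  shows "\<exists>B\<in>F. \<forall>Y\<in>F. B \<subseteq> Y \<longrightarrow> Y = B"
proof (rule subset_Zorn_nonempty[OF assms(1)])
  fix C assume C: "C \<noteq> {}" "subset.chain F C"
  then have "subset.chain {I. ideal I R} C"
    using assms(2) by (auto simp: subset_chain_def)
  then have "\<Union>C \<in> C" by (rule ideal_chain_is_trivial[OF C(1)])
  then show "\<Union>C \<in> F" using C(2) by (auto simp: subset_chain_def)
qed

locale noetherian_cring = noetherian_ring + cring

lemma (in noetherian_cring) ideal_contains_prime_product:
  assumes I: "ideal I R"
  shows "\<exists>Ps. prime_product_in I Ps"
proof (rule ccontr)
  assume "\<not> ?thesis"
  then have "\<exists>B\<in>{Y. ideal Y R \<and> (\<nexists>Ps. prime_product_in Y Ps)}.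
      \<forall>Y\<in>{Y. ideal Y R \<and> (\<nexists>Ps. prime_product_in Y Ps)}. B \<subseteq> Y \<longrightarrow> Y = B"
    using I by (intro ideals_have_maximal_element) auto
  then obtain B where B: "ideal B R" "\<nexists>Ps. prime_product_in B Ps"
    and Bmax: "\<And>Y. ideal Y R \<Longrightarrow> \<nexists>Ps. prime_product_in Y Ps \<Longrightarrow> B \<subseteq> Y \<Longrightarrow> Y = B"
    by auto
  have "prime_product_in (carrier R) []" unfolding prime_product_in_def by simp
  then have "carrier R \<noteq> B" using B(2) by blast
  moreover have "\<not> primeideal B R" using B(2) prime_product_in_prime by blast
  ultimately obtain a b where ab: "a \<in> carrier R" "b \<in> carrier R" "a \<otimes> b \<in> B" "a \<notin> B" "b \<notin> B"
    using ideal.primeidealCD[OF B(1) is_cring] by blast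
  have BR: "B \<subseteq> carrier R" using ideal.Icarr[OF B(1)] by blast
  have enlarge: "\<exists>Ps. prime_product_in (Idl (insert c B)) Ps \<and> B \<subseteq> Idl (insert c B)"
    if c: "c \<in> carrier R" "c \<notin> B" for c
  proof -
    have cB: "insert c B \<subseteq> carrier R" using BR c by blast
    have sub: "insert c B \<subseteq> Idl (insert c B)" using genideal_self[OF cB] .
    then have "Idl (insert c B) \<noteq> B" using c by blast
    then have "\<exists>Ps. prime_product_in (Idl (insert c B)) Ps"
      using Bmax[OF genideal_ideal[OF cB]] sub by blast
    then show ?thesis using sub by blast
  qed
  obtain Ps Qs where "prime_product_in (Idl (insert a B)) Ps" "prime_product_in (Idl (insert b B)) Qs"
    "B \<subseteq> Idl (insert a B)" "B \<subseteq> Idl (insert b B)"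
    using enlarge[of a] enlarge[of b] ab by blast
  then have "prime_product_in B (Ps @ Qs)"
    using genideal_insert_mult_closed[OF B(1) ab(1-3)] by (rule prime_product_in_append)
  then show False using B(2) by blast
qed

section \<open>Submodules, cyclic modules and annihilators\<close>

lemma (in abelian_group) minus_eq_zero_iff:
  assumes "x \<in> carrier G" "y \<in> carrier G"
  shows "x \<ominus> y = \<zero> \<longleftrightarrow> x = y"
  using assms by (metis a_minus_def add.inv_closed minus_equality r_neg)

context module
begin

lemma submodule_zero_closed: "submodule N R M \<Longrightarrow> \<zero>\<^bsub>M\<^esub> \<in> N"
  using submodule.axioms(1) subgroup.one_closed by fastforce

lemma submodule_add_cancel:
  assumes N: "submodule N R M" and x: "x \<in> carrier M" and y: "y \<in> N"
  shows "x \<oplus>\<^bsub>M\<^esub> y \<in> N \<longleftrightarrow> x \<in> N"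
proof
  have yc: "y \<in> carrier M" using y submoduleE(1)[OF N] by blast
  assume "x \<oplus>\<^bsub>M\<^esub> y \<in> N"
  then have "(x \<oplus>\<^bsub>M\<^esub> y) \<oplus>\<^bsub>M\<^esub> \<ominus>\<^bsub>M\<^esub> y \<in> N"
    using submoduleE(3,5)[OF N] y by blast
  then show "x \<in> N" using x yc by (simp add: M.a_assoc M.r_neg)
qed (use submoduleE(5)[OF N] y in blast)

lemma smult_minus_l_distr:
  assumes "a \<in> carrier R" "b \<in> carrier R" "x \<in> carrier M"
  shows "(a \<ominus> b) \<odot>\<^bsub>M\<^esub> x = a \<odot>\<^bsub>M\<^esub> x \<ominus>\<^bsub>M\<^esub> b \<odot>\<^bsub>M\<^esub> x"
  using assms by (simp add: R.minus_eq M.minus_eq smult_l_distr smult_l_minus)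

lemma smult_minus_r_distr:
  assumes "a \<in> carrier R" "x \<in> carrier M" "y \<in> carrier M"
  shows "a \<odot>\<^bsub>M\<^esub> (x \<ominus>\<^bsub>M\<^esub> y) = a \<odot>\<^bsub>M\<^esub> x \<ominus>\<^bsub>M\<^esub> a \<odot>\<^bsub>M\<^esub> y"
  using assms by (simp add: M.minus_eq smult_r_distr smult_r_minus)

lemma gen_submodule_is_submodule:
  assumes "S \<subseteq> carrier M"
  shows "submodule (gen_submodule R M S) R M"
proof (rule submoduleI)
  have "carrier M \<in> {N. submodule N R M \<and> S \<subseteq> N}"
    using carrier_is_submodule assms by blast
  then show "gen_submodule R M S \<subseteq> carrier M" unfolding gen_submodule_def by blast
  show "\<zero>\<^bsub>M\<^esub> \<in> gen_submodule R M S"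
    unfolding gen_submodule_def using submodule_zero_closed by blast
  show "\<ominus>\<^bsub>M\<^esub> x \<in> gen_submodule R M S" if "x \<in> gen_submodule R M S" for x
    using that submoduleE(3) unfolding gen_submodule_def by blast
  show "x \<oplus>\<^bsub>M\<^esub> y \<in> gen_submodule R M S" if "x \<in> gen_submodule R M S" "y \<in> gen_submodule R M S" for x y
    using that submoduleE(5) unfolding gen_submodule_def by blast
  show "a \<odot>\<^bsub>M\<^esub> x \<in> gen_submodule R M S" if "a \<in> carrier R" "x \<in> gen_submodule R M S" for a x
    using that submoduleE(4) unfolding gen_submodule_def by blast
qed

lemma gen_submodule_minimal: "submodule N R M \<Longrightarrow> S \<subseteq> N \<Longrightarrow> gen_submodule R M S \<subseteq> N"
  unfolding gen_submodule_def by blast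

lemma gen_submodule_incl: "S \<subseteq> gen_submodule R M S"
  unfolding gen_submodule_def by blast

lemma ideal_times_module_is_submodule:
  "I \<subseteq> carrier R \<Longrightarrow> submodule (ideal_times_module R I M) R M"
  unfolding ideal_times_module_def by (rule gen_submodule_is_submodule) blast

lemma smult_mem_ideal_times_module:
  "a \<in> I \<Longrightarrow> x \<in> carrier M \<Longrightarrow> a \<odot>\<^bsub>M\<^esub> x \<in> ideal_times_module R I M"
  unfolding ideal_times_module_def by (rule subsetD[OF gen_submodule_incl]) blast

lemma ideal_times_module_minimal:
  assumes "submodule N R M" and "\<And>a x. a \<in> I \<Longrightarrow> x \<in> carrier M \<Longrightarrow> a \<odot>\<^bsub>M\<^esub> x \<in> N"
  shows "ideal_times_module R I M \<subseteq> N"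
  unfolding ideal_times_module_def using assms by (intro gen_submodule_minimal) blast+

lemma ideal_times_module_mono:
  assumes "J \<subseteq> carrier R" and "I \<subseteq> J"
  shows "ideal_times_module R I M \<subseteq> ideal_times_module R J M"
  using assms by (intro ideal_times_module_minimal ideal_times_module_is_submodule)
    (auto intro: smult_mem_ideal_times_module)

lemma ideal_smult_preimage:
  assumes N: "submodule N R M" and x: "x \<in> carrier M"
  shows "ideal {a \<in> carrier R. a \<odot>\<^bsub>M\<^esub> x \<in> N} R"
proof (rule idealI)
  show "subgroup {a \<in> carrier R. a \<odot>\<^bsub>M\<^esub> x \<in> N} (add_monoid R)"
  proof (rule R.add.subgroupI)
    show "{a \<in> carrier R. a \<odot>\<^bsub>M\<^esub> x \<in> N} \<noteq> {}"
      using x submodule_zero_closed[OF N] by force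
  qed (use x submoduleE(3,5)[OF N] in \<open>auto simp: smult_l_minus smult_l_distr\<close>)
  have "(b \<otimes> a) \<odot>\<^bsub>M\<^esub> x \<in> N" if "a \<in> carrier R" "a \<odot>\<^bsub>M\<^esub> x \<in> N" "b \<in> carrier R" for a b
    using that x submoduleE(4)[OF N] by (simp add: smult_assoc1)
  then show "b \<otimes> a \<in> {a \<in> carrier R. a \<odot>\<^bsub>M\<^esub> x \<in> N}" "a \<otimes> b \<in> {a \<in> carrier R. a \<odot>\<^bsub>M\<^esub> x \<in> N}"
    if "a \<in> {a \<in> carrier R. a \<odot>\<^bsub>M\<^esub> x \<in> N}" "b \<in> carrier R" for a b
    using that by (auto simp: R.m_comm)
qed (rule R.ring_axioms)

definition cyclic_submodule :: "'c \<Rightarrow> 'c set" where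
  "cyclic_submodule m = (\<lambda>a. a \<odot>\<^bsub>M\<^esub> m) ` carrier R"

lemma mem_cyclic_submodule_iff: "x \<in> cyclic_submodule m \<longleftrightarrow> (\<exists>a\<in>carrier R. x = a \<odot>\<^bsub>M\<^esub> m)"
  unfolding cyclic_submodule_def by blast

lemma cyclic_submodule_is_submodule:
  assumes m: "m \<in> carrier M"
  shows "submodule (cyclic_submodule m) R M"
proof (rule submoduleI)
  show "cyclic_submodule m \<subseteq> carrier M"
    using m by (auto simp: mem_cyclic_submodule_iff)
  show "\<zero>\<^bsub>M\<^esub> \<in> cyclic_submodule m"
    using m unfolding mem_cyclic_submodule_iff by (force intro: bexI[of _ \<zero>])
  show "\<ominus>\<^bsub>M\<^esub> x \<in> cyclic_submodule m" if x: "x \<in> cyclic_submodule m" for x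
    using x m unfolding mem_cyclic_submodule_iff by (force simp: smult_l_minus[symmetric])
  show "x \<oplus>\<^bsub>M\<^esub> y \<in> cyclic_submodule m"
    if xy: "x \<in> cyclic_submodule m" "y \<in> cyclic_submodule m" for x y
    using xy m unfolding mem_cyclic_submodule_iff by (force simp: smult_l_distr[symmetric])
  show "a \<odot>\<^bsub>M\<^esub> x \<in> cyclic_submodule m" if ax: "a \<in> carrier R" "x \<in> cyclic_submodule m" for a x
    using ax m unfolding mem_cyclic_submodule_iff by (force simp: smult_assoc1[symmetric])
qed

lemma mem_cyclic_submodule_self: "m \<in> carrier M \<Longrightarrow> m \<in> cyclic_submodule m"
  unfolding cyclic_submodule_def by (force intro: image_eqI[of _ _ \<one>])

definition annihilator :: "'a set" where
  "annihilator = {a \<in> carrier R. \<forall>x\<in>carrier M. a \<odot>\<^bsub>M\<^esub> x = \<zero>\<^bsub>M\<^esub>}"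

lemma annihilator_is_ideal: "ideal annihilator R"
proof (rule idealI)
  show "subgroup annihilator (add_monoid R)"
  proof (rule R.add.subgroupI)
    show "annihilator \<noteq> {}" unfolding annihilator_def by force
    show "\<ominus> a \<in> annihilator" if "a \<in> annihilator" for a
      using that unfolding annihilator_def by (simp add: smult_l_minus)
    show "a \<oplus> b \<in> annihilator" if "a \<in> annihilator" "b \<in> annihilator" for a b
      using that unfolding annihilator_def by (simp add: smult_l_distr)
  qed (auto simp: annihilator_def)
  show "x \<otimes> a \<in> annihilator" "a \<otimes> x \<in> annihilator" if "a \<in> annihilator" "x \<in> carrier R" for a x
    using that unfolding annihilator_def by (simp_all add: smult_assoc1 R.m_comm)
qed (rule R.ring_axioms)

lemma smult_eq_iff_diff_mem_annihilator:
  assumes m: "m \<in> carrier M" and cyclic: "carrier M = cyclic_submodule m"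
    and ab: "a \<in> carrier R" "b \<in> carrier R"
  shows "a \<odot>\<^bsub>M\<^esub> m = b \<odot>\<^bsub>M\<^esub> m \<longleftrightarrow> a \<ominus> b \<in> annihilator"
proof
  assume "a \<odot>\<^bsub>M\<^esub> m = b \<odot>\<^bsub>M\<^esub> m"
  then have zero: "(a \<ominus> b) \<odot>\<^bsub>M\<^esub> m = \<zero>\<^bsub>M\<^esub>"
    using ab m by (simp add: smult_minus_l_distr M.minus_eq_zero_iff)
  have "(a \<ominus> b) \<odot>\<^bsub>M\<^esub> x = \<zero>\<^bsub>M\<^esub>" if x: "x \<in> carrier M" for x
  proof -
    obtain c where c: "c \<in> carrier R" "x = c \<odot>\<^bsub>M\<^esub> m"
      using x cyclic mem_cyclic_submodule_iff by blast
    then have "(a \<ominus> b) \<odot>\<^bsub>M\<^esub> x = c \<odot>\<^bsub>M\<^esub> ((a \<ominus> b) \<odot>\<^bsub>M\<^esub> m)"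
      using ab m by (simp add: R.m_comm flip: smult_assoc1)
    then show ?thesis using zero c(1) by simp
  qed
  then show "a \<ominus> b \<in> annihilator" unfolding annihilator_def using ab by simp
next
  assume "a \<ominus> b \<in> annihilator"
  then have "(a \<ominus> b) \<odot>\<^bsub>M\<^esub> m = \<zero>\<^bsub>M\<^esub>" using m unfolding annihilator_def by blast
  then show "a \<odot>\<^bsub>M\<^esub> m = b \<odot>\<^bsub>M\<^esub> m"
    using ab m by (simp add: smult_minus_l_distr M.minus_eq_zero_iff)
qed

lemma smult_preimage_eq_coset:
  assumes m: "m \<in> carrier M" and cyclic: "carrier M = cyclic_submodule m" and c: "c \<in> carrier R"
  shows "{a \<in> carrier R. a \<odot>\<^bsub>M\<^esub> m = c \<odot>\<^bsub>M\<^esub> m} = annihilator +> c"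
proof (intro Set.set_eqI iffI)
  fix a assume "a \<in> {a \<in> carrier R. a \<odot>\<^bsub>M\<^esub> m = c \<odot>\<^bsub>M\<^esub> m}"
  then have a: "a \<in> carrier R" "a \<ominus> c \<in> annihilator"
    using smult_eq_iff_diff_mem_annihilator[OF m cyclic _ c] by auto
  then have "a = (a \<ominus> c) \<oplus> c" using c by (simp add: R.minus_eq R.a_assoc R.l_neg)
  then show "a \<in> annihilator +> c" using a(2) unfolding a_r_coset_def' by blast
next
  fix a assume "a \<in> annihilator +> c"
  then obtain h where h: "h \<in> annihilator" "a = h \<oplus> c" unfolding a_r_coset_def' by blast
  then have hc: "h \<in> carrier R" unfolding annihilator_def by blast
  have "a \<odot>\<^bsub>M\<^esub> m = c \<odot>\<^bsub>M\<^esub> m"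
    using h hc c m unfolding annihilator_def by (simp add: smult_l_distr)
  then show "a \<in> {a \<in> carrier R. a \<odot>\<^bsub>M\<^esub> m = c \<odot>\<^bsub>M\<^esub> m}" using h(2) hc c by simp
qed

lemma cyclic_module_iso_quotient:
  assumes m: "m \<in> carrier M" and cyclic: "carrier M = cyclic_submodule m"
  shows "module_iso R M (quotient_module R annihilator) (\<lambda>x. {a \<in> carrier R. a \<odot>\<^bsub>M\<^esub> m = x})"
proof -
  let ?A = annihilator and ?f = "\<lambda>x. {a \<in> carrier R. a \<odot>\<^bsub>M\<^esub> m = x}"
  have A: "ideal ?A R" by (rule annihilator_is_ideal)
  have gen: "\<exists>c\<in>carrier R. x = c \<odot>\<^bsub>M\<^esub> m" if "x \<in> carrier M" for x
    using that cyclic mem_cyclic_submodule_iff by blast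
  note f_coset = smult_preimage_eq_coset[OF m cyclic]
  have carrier_quotient: "carrier (quotient_module R ?A) = (\<Union>c\<in>carrier R. {?A +> c})"
    unfolding quotient_module_def FactRing_def by (simp add: A_RCOSETS_def')
  show ?thesis
    unfolding module_iso_def
  proof (intro conjI ballI)
    have "inj_on ?f (carrier M)"
    proof (rule inj_onI)
      fix x y assume x: "x \<in> carrier M" and "y \<in> carrier M" and eq: "?f x = ?f y"
      obtain c where c: "c \<in> carrier R" "x = c \<odot>\<^bsub>M\<^esub> m" using gen[OF x] by blast
      then have "c \<in> ?f y" using eq by blast
      then show "x = y" using c by simp
    qed
    moreover have "?f ` carrier M = carrier (quotient_module R ?A)"
      unfolding carrier_quotient using gen f_coset m by (auto simp: image_iff) (metis smult_closed)
    ultimately show "bij_betw ?f (carrier M) (carrier (quotient_module R ?A))"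
      unfolding bij_betw_def by blast
    fix x y assume x: "x \<in> carrier M" and y: "y \<in> carrier M"
    obtain c c' where c: "c \<in> carrier R" "x = c \<odot>\<^bsub>M\<^esub> m" "c' \<in> carrier R" "y = c' \<odot>\<^bsub>M\<^esub> m"
      using gen[OF x] gen[OF y] by blast
    have "x \<oplus>\<^bsub>M\<^esub> y = (c \<oplus> c') \<odot>\<^bsub>M\<^esub> m" using c m by (simp add: smult_l_distr)
    then show "?f (x \<oplus>\<^bsub>M\<^esub> y) = ?f x \<oplus>\<^bsub>quotient_module R ?A\<^esub> ?f y"
      using c f_coset ideal.a_rcos_sum[OF A c(1,3)]
      unfolding quotient_module_def FactRing_def by simp
  next
    fix a x assume a: "a \<in> carrier R" and x: "x \<in> carrier M"
    obtain c where c: "c \<in> carrier R" "x = c \<odot>\<^bsub>M\<^esub> m" using gen[OF x] by blast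
    have "a \<odot>\<^bsub>M\<^esub> x = (a \<otimes> c) \<odot>\<^bsub>M\<^esub> m" using a c m by (simp add: smult_assoc1)
    then show "?f (a \<odot>\<^bsub>M\<^esub> x) = a \<odot>\<^bsub>quotient_module R ?A\<^esub> ?f x"
      using a c f_coset ideal.rcoset_mult_add[OF A a c(1)]
      unfolding quotient_module_def quot_smult_def FactRing_def by simp
  qed
qed

lemma module_iso_ideal_image:
  assumes f: "f \<in> carrier M \<rightarrow> carrier R" "inj_on f (carrier M)"
    and add: "\<And>x y. x \<in> carrier M \<Longrightarrow> y \<in> carrier M \<Longrightarrow> f (x \<oplus>\<^bsub>M\<^esub> y) = f x \<oplus> f y"
    and smult: "\<And>a x. a \<in> carrier R \<Longrightarrow> x \<in> carrier M \<Longrightarrow> f (a \<odot>\<^bsub>M\<^esub> x) = a \<otimes> f x"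
  shows "ideal (f ` carrier M) R" and "module_iso R M (ideal_module R (f ` carrier M)) f"
proof -
  have smult_mem: "a \<otimes> b \<in> f ` carrier M" if a: "a \<in> carrier R" and b: "b \<in> f ` carrier M" for a b
  proof -
    obtain x where x: "x \<in> carrier M" "b = f x" using b by blast
    then have "a \<otimes> b = f (a \<odot>\<^bsub>M\<^esub> x)" using smult a by simp
    then show ?thesis using a x(1) by simp
  qed
  show "ideal (f ` carrier M) R"
  proof (rule idealI)
    show "subgroup (f ` carrier M) (add_monoid R)"
    proof (rule R.add.subgroupI)
      show "f ` carrier M \<subseteq> carrier R" using f(1) by blast
      show "f ` carrier M \<noteq> {}" by blast
      show "\<ominus> b \<in> f ` carrier M" if b: "b \<in> f ` carrier M" for b
      proof -
        have "b \<in> carrier R" using b f(1) by blast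
        then have "\<ominus> b = \<ominus> \<one> \<otimes> b" by (simp add: R.l_minus)
        then show ?thesis using smult_mem[OF _ b, of "\<ominus> \<one>"] by simp
      qed
      show "b \<oplus> c \<in> f ` carrier M" if bc: "b \<in> f ` carrier M" "c \<in> f ` carrier M" for b c
      proof -
        obtain x y where "x \<in> carrier M" "y \<in> carrier M" "b = f x" "c = f y" using bc by blast
        then show ?thesis using add[of x y] by (metis M.a_closed imageI)
      qed
    qed
    show "a \<otimes> b \<in> f ` carrier M" if "b \<in> f ` carrier M" "a \<in> carrier R" for a b
      using smult_mem that by blast
    show "b \<otimes> a \<in> f ` carrier M" if "b \<in> f ` carrier M" "a \<in> carrier R" for a b
    proof -
      have "b \<in> carrier R" using that(1) f(1) by blast
      then show ?thesis using smult_mem[OF that(2,1)] that(2) by (simp add: R.m_comm)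
    qed
  qed (rule R.ring_axioms)
  show "module_iso R M (ideal_module R (f ` carrier M)) f"
    unfolding module_iso_def ideal_module_def using f add smult by (simp add: inj_on_imp_bij_betw)
qed

section \<open>Nakayama's lemma\<close>

definition linear_combinations :: "'a set \<Rightarrow> 'c set \<Rightarrow> 'c set" where
  "linear_combinations J S = {finsum M (\<lambda>s. c s \<odot>\<^bsub>M\<^esub> s) S | c. c \<in> S \<rightarrow> J}"

lemma linear_combinationsI:
  "c \<in> S \<rightarrow> J \<Longrightarrow> finsum M (\<lambda>s. c s \<odot>\<^bsub>M\<^esub> s) S \<in> linear_combinations J S"
  unfolding linear_combinations_def by blast

lemma smult_finsum_smult:
  assumes S: "finite S" "S \<subseteq> carrier M" and c: "c \<in> S \<rightarrow> carrier R" and a: "a \<in> carrier R"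
  shows "a \<odot>\<^bsub>M\<^esub> finsum M (\<lambda>s. c s \<odot>\<^bsub>M\<^esub> s) S = finsum M (\<lambda>s. (a \<otimes> c s) \<odot>\<^bsub>M\<^esub> s) S"
proof -
  have "(\<lambda>s. c s \<odot>\<^bsub>M\<^esub> s) \<in> S \<rightarrow> carrier M" using S c by auto
  then have "a \<odot>\<^bsub>M\<^esub> finsum M (\<lambda>s. c s \<odot>\<^bsub>M\<^esub> s) S = finsum M (\<lambda>s. a \<odot>\<^bsub>M\<^esub> (c s \<odot>\<^bsub>M\<^esub> s)) S"
    by (rule finsum_smult_ldistr[OF S(1) a])
  also have "\<dots> = finsum M (\<lambda>s. (a \<otimes> c s) \<odot>\<^bsub>M\<^esub> s) S"
    using S c a by (intro M.finsum_cong') (auto simp: smult_assoc1 Pi_iff subset_iff)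
  finally show ?thesis .
qed

lemma smult_mem_linear_combinations:
  assumes S: "finite S" "S \<subseteq> carrier M" and K: "K \<subseteq> carrier R" and a: "a \<in> carrier R"
    and aK: "\<And>k. k \<in> K \<Longrightarrow> a \<otimes> k \<in> J" and x: "x \<in> linear_combinations K S"
  shows "a \<odot>\<^bsub>M\<^esub> x \<in> linear_combinations J S"
proof -
  obtain c where c: "c \<in> S \<rightarrow> K" "x = finsum M (\<lambda>s. c s \<odot>\<^bsub>M\<^esub> s) S"
    using x unfolding linear_combinations_def by blast
  then have "a \<odot>\<^bsub>M\<^esub> x = finsum M (\<lambda>s. (a \<otimes> c s) \<odot>\<^bsub>M\<^esub> s) S"
    using smult_finsum_smult[OF S _ a] K by blast
  moreover have "(\<lambda>s. a \<otimes> c s) \<in> S \<rightarrow> J" using c aK by auto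
  ultimately show ?thesis using linear_combinationsI by simp
qed

lemma linear_combinations_is_submodule:
  assumes S: "finite S" "S \<subseteq> carrier M" and J: "ideal J R"
  shows "submodule (linear_combinations J S) R M"
proof (rule submoduleI)
  have JR: "J \<subseteq> carrier R" using ideal.Icarr[OF J] by blast
  have J0: "\<zero> \<in> J" using additive_subgroup.zero_closed[OF ideal.axioms(1)[OF J]] .
  have smult: "a \<odot>\<^bsub>M\<^esub> x \<in> linear_combinations J S"
    if "a \<in> carrier R" "x \<in> linear_combinations J S" for a x
    using that S JR ideal.I_l_closed[OF J] by (intro smult_mem_linear_combinations) auto
  show "linear_combinations J S \<subseteq> carrier M"
    using S JR unfolding linear_combinations_def by (force intro: M.finsum_closed)
  have "finsum M (\<lambda>s. \<zero> \<odot>\<^bsub>M\<^esub> s) S = finsum M (\<lambda>_. \<zero>\<^bsub>M\<^esub>) S"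
    using S by (intro M.finsum_cong') auto
  then show "\<zero>\<^bsub>M\<^esub> \<in> linear_combinations J S"
    using J0 linear_combinationsI[of "\<lambda>_. \<zero>" S J] by (simp add: Pi_iff)
  show "a \<odot>\<^bsub>M\<^esub> x \<in> linear_combinations J S" if "a \<in> carrier R" "x \<in> linear_combinations J S" for a x
    using smult that .
  show "\<ominus>\<^bsub>M\<^esub> x \<in> linear_combinations J S" if x: "x \<in> linear_combinations J S" for x
  proof -
    have "x \<in> carrier M" using x S JR unfolding linear_combinations_def by (force intro: M.finsum_closed)
    then have "\<ominus>\<^bsub>M\<^esub> x = (\<ominus> \<one>) \<odot>\<^bsub>M\<^esub> x" by (simp add: smult_l_minus)
    then show ?thesis using smult[OF _ x] by simp
  qed
  show "x \<oplus>\<^bsub>M\<^esub> y \<in> linear_combinations J S"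
    if xy: "x \<in> linear_combinations J S" "y \<in> linear_combinations J S" for x y
  proof -
    obtain c d where cd: "c \<in> S \<rightarrow> J" "x = finsum M (\<lambda>s. c s \<odot>\<^bsub>M\<^esub> s) S"
      "d \<in> S \<rightarrow> J" "y = finsum M (\<lambda>s. d s \<odot>\<^bsub>M\<^esub> s) S"
      using xy unfolding linear_combinations_def by blast
    have "x \<oplus>\<^bsub>M\<^esub> y = finsum M (\<lambda>s. c s \<odot>\<^bsub>M\<^esub> s \<oplus>\<^bsub>M\<^esub> d s \<odot>\<^bsub>M\<^esub> s) S"
      using cd S JR by (simp add: M.finsum_addf Pi_iff subset_iff)
    also have "\<dots> = finsum M (\<lambda>s. (c s \<oplus> d s) \<odot>\<^bsub>M\<^esub> s) S"
      using cd S JR by (intro M.finsum_cong') (auto simp: smult_l_distr Pi_iff subset_iff)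
    moreover have "(\<lambda>s. c s \<oplus> d s) \<in> S \<rightarrow> J"
      using cd additive_subgroup.a_closed[OF ideal.axioms(1)[OF J]] by auto
    ultimately show ?thesis using linear_combinationsI by simp
  qed
qed

lemma mem_linear_combinations_self:
  assumes S: "finite S" "S \<subseteq> carrier M" and t: "t \<in> S"
  shows "t \<in> linear_combinations (carrier R) S"
proof -
  let ?c = "\<lambda>s. if s = t then \<one> else \<zero>"
  have tc: "t \<in> carrier M" using S t by blast
  have "finsum M (\<lambda>s. ?c s \<odot>\<^bsub>M\<^esub> s) (insert t (S - {t})) =
      ?c t \<odot>\<^bsub>M\<^esub> t \<oplus>\<^bsub>M\<^esub> finsum M (\<lambda>s. ?c s \<odot>\<^bsub>M\<^esub> s) (S - {t})"
    using S t by (intro M.finsum_insert) auto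
  also have "finsum M (\<lambda>s. ?c s \<odot>\<^bsub>M\<^esub> s) (S - {t}) = finsum M (\<lambda>_. \<zero>\<^bsub>M\<^esub>) (S - {t})"
    using S by (intro M.finsum_cong') auto
  finally have "finsum M (\<lambda>s. ?c s \<odot>\<^bsub>M\<^esub> s) S = t"
    using t tc by (simp add: insert_absorb)
  then show ?thesis using linear_combinationsI[of ?c S "carrier R"] by (simp add: Pi_iff)
qed

lemma linear_combinations_insert:
  assumes T: "finite T" "insert t T \<subseteq> carrier M" "t \<notin> T" and J: "J \<subseteq> carrier R"
    and x: "x \<in> linear_combinations J (insert t T)"
  shows "\<exists>a\<in>J. \<exists>y\<in>linear_combinations J T. x = a \<odot>\<^bsub>M\<^esub> t \<oplus>\<^bsub>M\<^esub> y"
proof -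
  obtain c where c: "c \<in> insert t T \<rightarrow> J" "x = finsum M (\<lambda>s. c s \<odot>\<^bsub>M\<^esub> s) (insert t T)"
    using x unfolding linear_combinations_def by blast
  have "x = c t \<odot>\<^bsub>M\<^esub> t \<oplus>\<^bsub>M\<^esub> finsum M (\<lambda>s. c s \<odot>\<^bsub>M\<^esub> s) T"
    unfolding c(2) using T c J by (intro M.finsum_insert) (auto simp: Pi_iff subset_iff)
  moreover have "finsum M (\<lambda>s. c s \<odot>\<^bsub>M\<^esub> s) T \<in> linear_combinations J T"
    using c by (intro linear_combinationsI) auto
  ultimately show ?thesis using c by blast
qed

lemma smult_linear_combinations_zero:
  assumes S: "finite S" "S \<subseteq> carrier M" and K: "K \<subseteq> carrier R" and r: "r \<in> carrier R"
    and rS: "\<And>s. s \<in> S \<Longrightarrow> r \<odot>\<^bsub>M\<^esub> s = \<zero>\<^bsub>M\<^esub>" and x: "x \<in> linear_combinations K S"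
  shows "r \<odot>\<^bsub>M\<^esub> x = \<zero>\<^bsub>M\<^esub>"
proof -
  obtain c where c: "c \<in> S \<rightarrow> K" "x = finsum M (\<lambda>s. c s \<odot>\<^bsub>M\<^esub> s) S"
    using x unfolding linear_combinations_def by blast
  then have "r \<odot>\<^bsub>M\<^esub> x = finsum M (\<lambda>s. (r \<otimes> c s) \<odot>\<^bsub>M\<^esub> s) S"
    using smult_finsum_smult[OF S _ r] K by blast
  also have "\<dots> = finsum M (\<lambda>_. \<zero>\<^bsub>M\<^esub>) S"
  proof (intro M.finsum_cong')
    fix s assume s: "s \<in> S"
    then have "(r \<otimes> c s) \<odot>\<^bsub>M\<^esub> s = c s \<odot>\<^bsub>M\<^esub> (r \<odot>\<^bsub>M\<^esub> s)"
      using c K r S by (simp add: smult_assoc1[symmetric] R.m_comm Pi_iff subset_iff)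
    then show "(r \<otimes> c s) \<odot>\<^bsub>M\<^esub> s = \<zero>\<^bsub>M\<^esub>" using rS[OF s] c K s by (auto simp: Pi_iff)
  qed auto
  finally show ?thesis by simp
qed

lemma smult_mem_linear_combinations_insert:
  assumes J: "ideal J R" and T: "finite T" "insert t T \<subseteq> carrier M" "t \<notin> T"
    and r: "r \<in> carrier R" "r \<odot>\<^bsub>M\<^esub> t \<in> linear_combinations J T"
    and w: "w \<in> linear_combinations J (insert t T)"
  shows "r \<odot>\<^bsub>M\<^esub> w \<in> linear_combinations J T"
proof -
  have JR: "J \<subseteq> carrier R" using ideal.Icarr[OF J] by blast
  have sub: "submodule (linear_combinations J T) R M"
    using linear_combinations_is_submodule[OF T(1) _ J] T(2) by blast
  obtain b z where bz: "b \<in> J" "z \<in> linear_combinations J T" "w = b \<odot>\<^bsub>M\<^esub> t \<oplus>\<^bsub>M\<^esub> z"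
    using linear_combinations_insert[OF T JR w] by blast
  have bc: "b \<in> carrier R" and zc: "z \<in> carrier M" and tc: "t \<in> carrier M"
    using bz JR submoduleE(1)[OF sub] T(2) by auto
  have "r \<odot>\<^bsub>M\<^esub> w = b \<odot>\<^bsub>M\<^esub> (r \<odot>\<^bsub>M\<^esub> t) \<oplus>\<^bsub>M\<^esub> r \<odot>\<^bsub>M\<^esub> z"
    using r(1) bc tc zc by (simp add: bz(3) smult_r_distr R.m_comm flip: smult_assoc1)
  then show ?thesis using submoduleE(4,5)[OF sub] bc r bz(2) by simp
qed

lemma nakayama_step:
  assumes J: "ideal J R" and T: "finite T" "insert t T \<subseteq> carrier M" "t \<notin> T"
    and s: "s \<in> J +> \<one>" and st: "\<forall>u\<in>insert t T. s \<odot>\<^bsub>M\<^esub> u \<in> linear_combinations J (insert t T)"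
  shows "\<exists>s'\<in>J +> \<one>. \<forall>u\<in>insert t T. s' \<odot>\<^bsub>M\<^esub> u \<in> linear_combinations J T"
proof -
  have JR: "J \<subseteq> carrier R" using ideal.Icarr[OF J] by blast
  have sc: "s \<in> carrier R" using s ideal.one_coset_subset_carrier[OF J] by blast
  have tc: "t \<in> carrier M" using T(2) by blast
  obtain a y where a: "a \<in> J" and y: "y \<in> linear_combinations J T"
    and sty: "s \<odot>\<^bsub>M\<^esub> t = a \<odot>\<^bsub>M\<^esub> t \<oplus>\<^bsub>M\<^esub> y"
    using linear_combinations_insert[OF T JR] st by blast
  have ac: "a \<in> carrier R" and yc: "y \<in> carrier M"
    using a y JR submoduleE(1)[OF linear_combinations_is_submodule[OF T(1) _ J]] T(2) by auto
  define r where "r = \<ominus> a \<oplus> s"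
  have r: "r \<in> J +> \<one>" "r \<in> carrier R"
    unfolding r_def using ideal.one_coset_add_closed[OF J s] a ac sc
      additive_subgroup.a_inv_closed[OF ideal.axioms(1)[OF J]] by (auto simp: a_inv_def)
  have "r \<odot>\<^bsub>M\<^esub> t = \<ominus>\<^bsub>M\<^esub> (a \<odot>\<^bsub>M\<^esub> t) \<oplus>\<^bsub>M\<^esub> (a \<odot>\<^bsub>M\<^esub> t \<oplus>\<^bsub>M\<^esub> y)"
    unfolding r_def using ac sc tc by (simp add: smult_l_distr smult_l_minus sty)
  also have "\<dots> = y" using ac tc yc by (simp add: M.a_assoc[symmetric] M.l_neg)
  finally have rt: "r \<odot>\<^bsub>M\<^esub> t \<in> linear_combinations J T" using y by simp
  have "(r \<otimes> s) \<odot>\<^bsub>M\<^esub> u \<in> linear_combinations J T" if u: "u \<in> insert t T" for u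
    using smult_mem_linear_combinations_insert[OF J T r(2) rt] st u r(2) sc T(2)
    by (auto simp: smult_assoc1)
  moreover have "r \<otimes> s \<in> J +> \<one>" using ideal.one_coset_mult_closed[OF J r(1) s] .
  ultimately show ?thesis by blast
qed

lemma nakayama_finite:
  assumes J: "ideal J R" and S: "finite S"
  shows "S \<subseteq> carrier M \<Longrightarrow> s \<in> J +> \<one> \<Longrightarrow> \<forall>u\<in>S. s \<odot>\<^bsub>M\<^esub> u \<in> linear_combinations J S \<Longrightarrow>
    \<exists>s'\<in>J +> \<one>. \<forall>u\<in>S. s' \<odot>\<^bsub>M\<^esub> u = \<zero>\<^bsub>M\<^esub>"
  using S
proof (induction S arbitrary: s rule: finite_induct)
  case (insert t T)
  obtain s' where s': "s' \<in> J +> \<one>" "\<forall>u\<in>insert t T. s' \<odot>\<^bsub>M\<^esub> u \<in> linear_combinations J T"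
    using nakayama_step[OF J insert.hyps(1) insert.prems(1) insert.hyps(2) insert.prems(2,3)] by blast
  have T: "T \<subseteq> carrier M" using insert.prems(1) by blast
  obtain s'' where s'': "s'' \<in> J +> \<one>" "\<forall>u\<in>T. s'' \<odot>\<^bsub>M\<^esub> u = \<zero>\<^bsub>M\<^esub>"
    using insert.IH[OF T s'(1)] s'(2) by blast
  have c: "s' \<in> carrier R" "s'' \<in> carrier R" using s'(1) s''(1) ideal.one_coset_subset_carrier[OF J] by auto
  have "(s'' \<otimes> s') \<odot>\<^bsub>M\<^esub> u = \<zero>\<^bsub>M\<^esub>" if u: "u \<in> insert t T" for u
  proof -
    have "s'' \<odot>\<^bsub>M\<^esub> (s' \<odot>\<^bsub>M\<^esub> u) = \<zero>\<^bsub>M\<^esub>"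
      using smult_linear_combinations_zero[OF insert.hyps(1) T _ c(2)] s''(2) s'(2) u ideal.Icarr[OF J]
      by blast
    then show ?thesis using c u insert.prems(1) by (auto simp: smult_assoc1)
  qed
  then show ?case using ideal.one_coset_mult_closed[OF J s''(1) s'(1)] by blast
qed blast

lemma nakayama:
  assumes J: "ideal J R" and fg: "finitely_generated_module R M"
    and MJ: "carrier M \<subseteq> ideal_times_module R J M"
  shows "\<exists>s\<in>J +> \<one>. s \<in> annihilator"
proof -
  obtain S where S: "finite S" "S \<subseteq> carrier M" and gen: "carrier M = gen_submodule R M S"
    using fg unfolding finitely_generated_module_def by blast
  have span: "carrier M = linear_combinations (carrier R) S"
  proof
    show "carrier M \<subseteq> linear_combinations (carrier R) S"
      unfolding gen using mem_linear_combinations_self[OF S]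
      by (intro gen_submodule_minimal linear_combinations_is_submodule[OF S R.oneideal]) blast
  qed (rule submoduleE(1)[OF linear_combinations_is_submodule[OF S R.oneideal]])
  have "ideal_times_module R J M \<subseteq> linear_combinations J S"
  proof (rule ideal_times_module_minimal[OF linear_combinations_is_submodule[OF S J]])
    fix a x assume "a \<in> J" "x \<in> carrier M"
    then show "a \<odot>\<^bsub>M\<^esub> x \<in> linear_combinations J S"
      using span ideal.I_r_closed[OF J] ideal.Icarr[OF J]
      by (intro smult_mem_linear_combinations[OF S, of "carrier R"]) auto
  qed
  then have "\<forall>u\<in>S. \<one> \<odot>\<^bsub>M\<^esub> u \<in> linear_combinations J S"
    using MJ S(2) by (auto simp: subset_iff)
  moreover have "\<one> \<in> J +> \<one>" by (rule ideal.one_mem_one_coset[OF J])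
  ultimately obtain s where s: "s \<in> J +> \<one>" "\<forall>u\<in>S. s \<odot>\<^bsub>M\<^esub> u = \<zero>\<^bsub>M\<^esub>"
    using nakayama_finite[OF J S(1) S(2)] by blast
  have "s \<in> carrier R" using s(1) ideal.one_coset_subset_carrier[OF J] by blast
  then have "s \<in> annihilator"
    unfolding annihilator_def using smult_linear_combinations_zero[OF S subset_refl] s(2) span by blast
  then show ?thesis using s(1) by blast
qed

lemma ideal_times_module_eq_carrier:
  assumes I: "ideal I R" and a: "a \<in> annihilator" "a \<in> I +> \<one>"
  shows "ideal_times_module R I M = carrier M"
proof
  show "ideal_times_module R I M \<subseteq> carrier M"
    using submoduleE(1)[OF ideal_times_module_is_submodule] ideal.Icarr[OF I] by blast
  show "carrier M \<subseteq> ideal_times_module R I M"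
  proof
    fix x assume x: "x \<in> carrier M"
    obtain i where i: "i \<in> I" "a = i \<oplus> \<one>" using a(2) by (auto simp: mem_one_coset_iff)
    have ic: "i \<in> carrier R" using i(1) ideal.Icarr[OF I] by blast
    have "\<zero>\<^bsub>M\<^esub> = i \<odot>\<^bsub>M\<^esub> x \<oplus>\<^bsub>M\<^esub> x"
      using a(1) x ic unfolding annihilator_def i(2) by (simp add: smult_l_distr)
    then have "x = (\<ominus> i) \<odot>\<^bsub>M\<^esub> x"
      using x ic by (simp add: smult_l_minus M.minus_equality M.a_comm)
    moreover have "\<ominus> i \<in> I"
      using i(1) additive_subgroup.a_inv_closed[OF ideal.axioms(1)[OF I]] by (simp add: a_inv_def)
    ultimately show "x \<in> ideal_times_module R I M" using smult_mem_ideal_times_module x by metis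
  qed
qed

section \<open>Faithful multiplication modules\<close>

lemma multiplication_module_exists_multiplier:
  assumes mult: "multiplication_module R M" and m: "m \<in> carrier M" "m \<noteq> \<zero>\<^bsub>M\<^esub>"
  shows "\<exists>a\<in>carrier R. a \<noteq> \<zero> \<and> (\<forall>x\<in>carrier M. a \<odot>\<^bsub>M\<^esub> x \<in> cyclic_submodule m)"
proof -
  obtain I where I: "ideal I R" "cyclic_submodule m = ideal_times_module R I M"
    using mult cyclic_submodule_is_submodule[OF m(1)] unfolding multiplication_module_def by blast
  have "\<not> I \<subseteq> {\<zero>}"
  proof
    assume "I \<subseteq> {\<zero>}"
    then have "ideal_times_module R I M \<subseteq> {\<zero>\<^bsub>M\<^esub>}"
      by (intro ideal_times_module_minimal submoduleI) auto
    then show False using mem_cyclic_submodule_self[OF m(1)] m(2) I(2) by blast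
  qed
  then obtain a where "a \<in> I" "a \<noteq> \<zero>" by blast
  then show ?thesis
    using I smult_mem_ideal_times_module ideal.Icarr[OF I(1)] by metis
qed

definition torsion_free :: bool where
  "torsion_free \<longleftrightarrow> (\<forall>r\<in>carrier R. \<forall>x\<in>carrier M. r \<odot>\<^bsub>M\<^esub> x = \<zero>\<^bsub>M\<^esub> \<longrightarrow> r = \<zero> \<or> x = \<zero>\<^bsub>M\<^esub>)"

lemma torsion_free_inj_on_smult_right:
  assumes tf: torsion_free and x: "x \<in> carrier M" "x \<noteq> \<zero>\<^bsub>M\<^esub>"
  shows "inj_on (\<lambda>a. a \<odot>\<^bsub>M\<^esub> x) (carrier R)"
proof (rule inj_onI)
  fix a b assume ab: "a \<in> carrier R" "b \<in> carrier R" "a \<odot>\<^bsub>M\<^esub> x = b \<odot>\<^bsub>M\<^esub> x"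
  then have "(a \<ominus> b) \<odot>\<^bsub>M\<^esub> x = \<zero>\<^bsub>M\<^esub>" using x(1) by (simp add: smult_minus_l_distr M.minus_eq_zero_iff)
  then have "a \<ominus> b = \<zero>" using tf x ab unfolding torsion_free_def by (meson R.minus_closed)
  then show "a = b" using ab by simp
qed

lemma torsion_free_inj_on_smult_left:
  assumes tf: torsion_free and d: "d \<in> carrier R" "d \<noteq> \<zero>"
  shows "inj_on (\<lambda>x. d \<odot>\<^bsub>M\<^esub> x) (carrier M)"
proof (rule inj_onI)
  fix x y assume xy: "x \<in> carrier M" "y \<in> carrier M" "d \<odot>\<^bsub>M\<^esub> x = d \<odot>\<^bsub>M\<^esub> y"
  then have "d \<odot>\<^bsub>M\<^esub> (x \<ominus>\<^bsub>M\<^esub> y) = \<zero>\<^bsub>M\<^esub>" using d(1) by (simp add: smult_minus_r_distr M.minus_eq_zero_iff)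
  then have "x \<ominus>\<^bsub>M\<^esub> y = \<zero>\<^bsub>M\<^esub>" using tf d xy unfolding torsion_free_def by (meson M.minus_closed)
  then show "x = y" using xy by (simp add: M.minus_eq_zero_iff)
qed

lemma faithful_multiplication_module_torsion_free:
  assumes "domain R" and mult: "multiplication_module R M" and faithful: "annihilator = {\<zero>}"
  shows torsion_free
  unfolding torsion_free_def
proof (intro ballI impI)
  interpret domain R by fact
  fix r x assume r: "r \<in> carrier R" and x: "x \<in> carrier M" and rx: "r \<odot>\<^bsub>M\<^esub> x = \<zero>\<^bsub>M\<^esub>"
  show "r = \<zero> \<or> x = \<zero>\<^bsub>M\<^esub>"
  proof (rule disjCI)
    assume "x \<noteq> \<zero>\<^bsub>M\<^esub>"
    then obtain a where a: "a \<in> carrier R" "a \<noteq> \<zero>"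
      and ax: "\<forall>y\<in>carrier M. a \<odot>\<^bsub>M\<^esub> y \<in> cyclic_submodule x"
      using multiplication_module_exists_multiplier[OF mult x] by blast
    have "r \<otimes> a \<in> annihilator"
      unfolding annihilator_def
    proof (intro CollectI conjI ballI)
      fix y assume y: "y \<in> carrier M"
      obtain c where c: "c \<in> carrier R" "a \<odot>\<^bsub>M\<^esub> y = c \<odot>\<^bsub>M\<^esub> x"
        using ax y unfolding mem_cyclic_submodule_iff by blast
      have "(r \<otimes> a) \<odot>\<^bsub>M\<^esub> y = c \<odot>\<^bsub>M\<^esub> (r \<odot>\<^bsub>M\<^esub> x)"
        using r a y c x by (simp add: smult_assoc1 flip: smult_assoc1[of c r] R.m_comm[of r c])
      then show "(r \<otimes> a) \<odot>\<^bsub>M\<^esub> y = \<zero>\<^bsub>M\<^esub>" using rx c(1) by simp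
    qed (use r a in simp)
    then show "r = \<zero>" using faithful integral r a by blast
  qed
qed

lemma torsion_free_iso_ideal:
  assumes tf: torsion_free and x0: "x0 \<in> carrier M" "x0 \<noteq> \<zero>\<^bsub>M\<^esub>"
    and d: "d \<in> carrier R" "d \<noteq> \<zero>" and dx: "\<forall>x\<in>carrier M. d \<odot>\<^bsub>M\<^esub> x \<in> cyclic_submodule x0"
  shows "\<exists>J. ideal J R \<and> J \<noteq> {\<zero>} \<and> module_isomorphic R M (ideal_module R J)"
proof -
  note inj = torsion_free_inj_on_smult_right[OF tf x0]
  define f where "f x = the_inv_into (carrier R) (\<lambda>a. a \<odot>\<^bsub>M\<^esub> x0) (d \<odot>\<^bsub>M\<^esub> x)" for x
  have f: "f x \<in> carrier R" "f x \<odot>\<^bsub>M\<^esub> x0 = d \<odot>\<^bsub>M\<^esub> x" if x: "x \<in> carrier M" for x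
  proof -
    have "d \<odot>\<^bsub>M\<^esub> x \<in> (\<lambda>a. a \<odot>\<^bsub>M\<^esub> x0) ` carrier R"
      using dx x unfolding cyclic_submodule_def by blast
    then show "f x \<in> carrier R" "f x \<odot>\<^bsub>M\<^esub> x0 = d \<odot>\<^bsub>M\<^esub> x"
      unfolding f_def using the_inv_into_into[OF inj] f_the_inv_into_f[OF inj] by auto
  qed
  have f_eq: "f x = a" if "x \<in> carrier M" "a \<in> carrier R" "a \<odot>\<^bsub>M\<^esub> x0 = d \<odot>\<^bsub>M\<^esub> x" for x a
    using inj_onD[OF inj, of "f x" a] f that by simp
  have f_Pi: "f \<in> carrier M \<rightarrow> carrier R" using f by blast
  have f_inj: "inj_on f (carrier M)"
  proof (rule inj_onI)
    fix x y assume xy: "x \<in> carrier M" "y \<in> carrier M" "f x = f y"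
    then have "d \<odot>\<^bsub>M\<^esub> x = d \<odot>\<^bsub>M\<^esub> y" using f by metis
    then show "x = y" using inj_onD[OF torsion_free_inj_on_smult_left[OF tf d]] xy by blast
  qed
  have f_add: "f (x \<oplus>\<^bsub>M\<^esub> y) = f x \<oplus> f y" if "x \<in> carrier M" "y \<in> carrier M" for x y
    using that f d x0 by (intro f_eq) (auto simp: smult_l_distr smult_r_distr)
  have f_smult: "f (a \<odot>\<^bsub>M\<^esub> x) = a \<otimes> f x" if a: "a \<in> carrier R" and x: "x \<in> carrier M" for a x
  proof (rule f_eq)
    have "(a \<otimes> f x) \<odot>\<^bsub>M\<^esub> x0 = a \<odot>\<^bsub>M\<^esub> (d \<odot>\<^bsub>M\<^esub> x)" using a x x0 f by (simp add: smult_assoc1)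
    also have "\<dots> = d \<odot>\<^bsub>M\<^esub> (a \<odot>\<^bsub>M\<^esub> x)" using a x d by (simp add: R.m_comm flip: smult_assoc1)
    finally show "(a \<otimes> f x) \<odot>\<^bsub>M\<^esub> x0 = d \<odot>\<^bsub>M\<^esub> (a \<odot>\<^bsub>M\<^esub> x)" .
  qed (use a x f in auto)
  have "f x0 = d" using f_eq x0 d by simp
  then have "f ` carrier M \<noteq> {\<zero>}" using x0 d by blast
  then show ?thesis
    using module_iso_ideal_image[OF f_Pi f_inj f_add f_smult] unfolding module_isomorphic_def by blast
qed

lemma faithful_multiplication_module_iso_ideal:
  assumes dom: "domain R" and mult: "multiplication_module R M"
    and faithful: "annihilator = {\<zero>}" and nontrivial: "carrier M \<noteq> {\<zero>\<^bsub>M\<^esub>}"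
  shows "\<exists>J. ideal J R \<and> J \<noteq> {\<zero>} \<and> module_isomorphic R M (ideal_module R J)"
proof -
  obtain x0 where x0: "x0 \<in> carrier M" "x0 \<noteq> \<zero>\<^bsub>M\<^esub>" using nontrivial by blast
  obtain d where "d \<in> carrier R" "d \<noteq> \<zero>" "\<forall>x\<in>carrier M. d \<odot>\<^bsub>M\<^esub> x \<in> cyclic_submodule x0"
    using multiplication_module_exists_multiplier[OF mult x0] by blast
  then show ?thesis
    using torsion_free_iso_ideal[OF faithful_multiplication_module_torsion_free[OF dom mult faithful] x0]
    by blast
qed

section \<open>Multiplication modules with nonzero annihilator\<close>

lemma mem_ideal_times_module_of_smult:
  assumes Q: "maximalideal Q R" and f: "f \<in> carrier R" "f \<notin> Q" and x: "x \<in> carrier M"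
    and fx: "f \<odot>\<^bsub>M\<^esub> x \<in> ideal_times_module R Q M"
  shows "x \<in> ideal_times_module R Q M"
proof -
  have QI: "ideal Q R" using Q by (rule maximalideal.axioms(1))
  have QR: "Q \<subseteq> carrier R" using ideal.Icarr[OF QI] by blast
  let ?C = "{a \<in> carrier R. a \<odot>\<^bsub>M\<^esub> x \<in> ideal_times_module R Q M}"
  have C: "ideal ?C R"
    by (rule ideal_smult_preimage[OF ideal_times_module_is_submodule[OF QR] x])
  have "Q \<subseteq> ?C"
  proof
    fix q assume q: "q \<in> Q"
    then have "q \<odot>\<^bsub>M\<^esub> x \<in> ideal_times_module R Q M" by (rule smult_mem_ideal_times_module[OF _ x])
    then show "q \<in> ?C" using q QR by blast
  qed
  moreover have "?C \<subseteq> carrier R" by blast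
  ultimately have "?C = Q \<or> ?C = carrier R"
    by (rule maximalideal.I_maximal[OF Q C])
  moreover have "f \<in> ?C" using f(1) fx by blast
  ultimately have "?C = carrier R" using f(2) by blast
  then have "\<one> \<in> ?C" by (metis R.one_closed)
  then show ?thesis using x by simp
qed

text \<open>If m' lies in Q M, then m' + f mQ leaves Q M because f \<notin> Q, and stays outside
  every P M because f \<in> P.\<close>
lemma exists_not_mem_ideal_times_modules_insert:
  assumes Q: "maximalideal Q R" and mQ: "mQ \<in> carrier M" "mQ \<notin> ideal_times_module R Q M"
    and f: "f \<in> carrier R" "f \<notin> Q" "\<forall>P\<in>Ps. f \<in> P"
    and Ps: "\<forall>P\<in>Ps. ideal P R"
    and m': "m' \<in> carrier M" "\<forall>P\<in>Ps. m' \<notin> ideal_times_module R P M"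
  shows "\<exists>m\<in>carrier M. \<forall>P\<in>insert Q Ps. m \<notin> ideal_times_module R P M"
proof (cases "m' \<in> ideal_times_module R Q M")
  case False
  then show ?thesis using m' by blast
next
  case True
  let ?y = "f \<odot>\<^bsub>M\<^esub> mQ"
  have yc: "?y \<in> carrier M" using f(1) mQ(1) by simp
  have sub: "submodule (ideal_times_module R P M) R M" if "ideal P R" for P
    using ideal_times_module_is_submodule ideal.Icarr[OF that] by blast
  have QI: "ideal Q R" using Q by (rule maximalideal.axioms(1))
  have "?y \<notin> ideal_times_module R Q M"
    using mem_ideal_times_module_of_smult[OF Q f(1,2) mQ(1)] mQ(2) by blast
  then have "?y \<oplus>\<^bsub>M\<^esub> m' \<notin> ideal_times_module R Q M"
    using submodule_add_cancel[OF sub[OF QI] yc True] by simp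
  moreover have "?y \<oplus>\<^bsub>M\<^esub> m' \<notin> ideal_times_module R P M" if P: "P \<in> Ps" for P
  proof -
    have "?y \<in> ideal_times_module R P M"
      using smult_mem_ideal_times_module[OF _ mQ(1)] f(3) P by blast
    then have "m' \<oplus>\<^bsub>M\<^esub> ?y \<notin> ideal_times_module R P M"
      using submodule_add_cancel[OF sub m'(1)] m'(2) P Ps by simp
    then show ?thesis using M.a_comm[OF yc m'(1)] by simp
  qed
  moreover have "?y \<oplus>\<^bsub>M\<^esub> m' \<in> carrier M" using yc m'(1) by simp
  ultimately show ?thesis by blast
qed

lemma exists_not_mem_ideal_times_modules:
  assumes fin: "finite Ps" and max: "\<forall>P\<in>Ps. maximalideal P R"
    and proper: "\<forall>P\<in>Ps. \<not> carrier M \<subseteq> ideal_times_module R P M"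
  shows "\<exists>m\<in>carrier M. \<forall>P\<in>Ps. m \<notin> ideal_times_module R P M"
  using fin max proper
proof (induction Ps rule: finite_induct)
  case (insert Q Ps)
  obtain m' where m': "m' \<in> carrier M" "\<forall>P\<in>Ps. m' \<notin> ideal_times_module R P M"
    using insert.IH insert.prems by blast
  have Q: "maximalideal Q R" using insert.prems(1) by blast
  have QI: "ideal Q R" using Q by (rule maximalideal.axioms(1))
  obtain mQ where mQ: "mQ \<in> carrier M" "mQ \<notin> ideal_times_module R Q M"
    using insert.prems(2) by blast
  have Ps: "ideal P R \<and> \<not> P \<subseteq> Q" if P: "P \<in> Ps" for P
  proof
    have PM: "maximalideal P R" using insert.prems(1) P by blast
    then show "ideal P R" by (rule maximalideal.axioms(1))
    show "\<not> P \<subseteq> Q"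
    proof
      assume "P \<subseteq> Q"
      then have "Q = P \<or> Q = carrier R"
        using maximalideal.I_maximal[OF PM QI] ideal.Icarr[OF QI] by blast
      then show False using P insert.hyps(2) maximalideal.I_notcarr[OF Q] by blast
    qed
  qed
  obtain f where "f \<in> carrier R" "f \<notin> Q" "\<forall>P\<in>Ps. f \<in> P"
    using exists_mem_ideals_not_mem_prime[OF maximalideal_prime[OF Q] insert.hyps(1)] Ps by blast
  then show ?case using exists_not_mem_ideal_times_modules_insert[OF Q mQ] Ps m' by blast
qed (use M.zero_closed in blast)

lemma carrier_not_subset_ideal_times_module:
  assumes fg: "finitely_generated_module R M" and P: "ideal P R" "annihilator \<subseteq> P" "\<one> \<notin> P"
  shows "\<not> carrier M \<subseteq> ideal_times_module R P M"
proof
  assume "carrier M \<subseteq> ideal_times_module R P M"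
  then obtain s where "s \<in> P +> \<one>" "s \<in> annihilator" using nakayama[OF P(1) fg] by blast
  then show False using ideal.one_mem_if_meets_one_coset[OF P(1)] P(2,3) by blast
qed

lemma multiplication_module_cyclic:
  assumes mult: "multiplication_module R M"
    and Ps: "prime_product_in annihilator Ps" "\<forall>P\<in>set Ps. maximalideal P R"
    and m: "m \<in> carrier M" "\<forall>P\<in>set Ps. m \<notin> ideal_times_module R P M"
  shows "carrier M = cyclic_submodule m"
proof -
  obtain I where I: "ideal I R" "cyclic_submodule m = ideal_times_module R I M"
    using mult cyclic_submodule_is_submodule[OF m(1)] unfolding multiplication_module_def by blast
  have "\<forall>P\<in>set Ps. \<exists>p. p \<in> P \<and> p \<in> I +> \<one>"
  proof
    fix P assume P: "P \<in> set Ps"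
    have PM: "maximalideal P R" using Ps(2) P by blast
    have "\<not> I \<subseteq> P"
    proof
      assume "I \<subseteq> P"
      moreover have "P \<subseteq> carrier R" using ideal.Icarr[OF maximalideal.axioms(1)[OF PM]] by blast
      ultimately have "cyclic_submodule m \<subseteq> ideal_times_module R P M"
        unfolding I(2) by (rule ideal_times_module_mono[rotated])
      then show False using mem_cyclic_submodule_self[OF m(1)] m(2) P by blast
    qed
    then show "\<exists>p. p \<in> P \<and> p \<in> I +> \<one>" using ideal.maximalideal_meets_one_coset[OF I(1) PM] by blast
  qed
  then obtain p where p: "\<forall>P\<in>set Ps. p P \<in> P \<and> p P \<in> I +> \<one>" by (rule bchoice[THEN exE])
  let ?a = "foldr (\<otimes>) (map p Ps) \<one>"
  have "list_all2 (\<in>) (map p Ps) Ps" using p by (simp add: list_all2_map1 list_all2_same)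
  then have "?a \<in> annihilator" using Ps(1) unfolding prime_product_in_def by blast
  moreover have "?a \<in> I +> \<one>" using p by (intro ideal.one_coset_foldr_closed[OF I(1)]) auto
  ultimately show ?thesis using ideal_times_module_eq_carrier[OF I(1)] I(2) by simp
qed

lemma multiplication_module_iso_quotient_annihilator:
  assumes noeth: "noetherian_ring R" and mult: "multiplication_module R M"
    and fg: "finitely_generated_module R M"
    and dim_zero: "\<And>P. primeideal P R \<Longrightarrow> annihilator \<subseteq> P \<Longrightarrow> maximalideal P R"
  shows "module_isomorphic R M (quotient_module R annihilator)"
proof -
  interpret noetherian_cring R using noeth is_cring by (simp add: noetherian_cring_def)
  obtain Ps where Ps: "prime_product_in annihilator Ps"
    using ideal_contains_prime_product[OF annihilator_is_ideal] by blast
  have max: "\<forall>P\<in>set Ps. maximalideal P R"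
    using Ps dim_zero unfolding prime_product_in_def by blast
  have "\<forall>P\<in>set Ps. \<not> carrier M \<subseteq> ideal_times_module R P M"
  proof
    fix P assume "P \<in> set Ps"
    then have P: "maximalideal P R" "annihilator \<subseteq> P" using max Ps unfolding prime_product_in_def by auto
    have "\<one> \<notin> P"
      using ideal.one_imp_carrier[OF maximalideal.axioms(1)] maximalideal.I_notcarr P(1) by blast
    then show "\<not> carrier M \<subseteq> ideal_times_module R P M"
      using carrier_not_subset_ideal_times_module[OF fg maximalideal.axioms(1)[OF P(1)] P(2)] by blast
  qed
  then obtain m where m: "m \<in> carrier M" "\<forall>P\<in>set Ps. m \<notin> ideal_times_module R P M"
    using exists_not_mem_ideal_times_modules[OF finite_set max] by blast
  then have "carrier M = cyclic_submodule m"
    using multiplication_module_cyclic[OF mult Ps max] by blast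
  then show ?thesis
    using cyclic_module_iso_quotient m(1) unfolding module_isomorphic_def by blast
qed

end

theorem mainTheorem9:
  fixes D :: "('a, 'c) ring_scheme" and M :: "('a, 'b, 'd) module_scheme"
  assumes "dedekind_domain D"
    and "module D M"
    and "carrier M \<noteq> {\<zero>\<^bsub>M\<^esub>}"
    and "finitely_generated_module D M"
    and "multiplication_module D M"
  shows "(\<exists>J. ideal J D \<and> J \<noteq> {\<zero>\<^bsub>D\<^esub>} \<and> module_isomorphic D M (ideal_module D J)) \<or>
         (\<exists>I. ideal I D \<and> I \<noteq> {\<zero>\<^bsub>D\<^esub>} \<and> module_isomorphic D M (quotient_module D I))"
proof -
  interpret module D M by fact
  have noeth: "noetherian_domain D" using assms(1) unfolding dedekind_domain_def by blast
  show ?thesis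
  proof (cases "annihilator = {\<zero>\<^bsub>D\<^esub>}")
    case True
    then show ?thesis
      using faithful_multiplication_module_iso_ideal[OF noetherian_domain.axioms(2)[OF noeth] assms(5)]
        assms(3) by blast
  next
    case False
    have "maximalideal P D" if "primeideal P D" "annihilator \<subseteq> P" for P
      using assms(1) that False additive_subgroup.zero_closed[OF ideal.axioms(1)[OF annihilator_is_ideal]]
      unfolding dedekind_domain_def by blast
    then have "module_isomorphic D M (quotient_module D annihilator)"
      using multiplication_module_iso_quotient_annihilator noetherian_domain.axioms(1)[OF noeth] assms(4,5)
      by blast
    then show ?thesis using annihilator_is_ideal False by blast
  qed
qed

end
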